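(* Let $X$ be a directed graph whose underlying undirected graph is a tree. Then $X$ is strongly $0$-hyperbolic.
   Context: Directed graphs may have loops and multiple edges. The underlying undirected graph of $X$ has the same vertices and a single undirected edge between $x$ and $y$ whenever $X$ has an edge from $x$ to $y$ or from $y$ to $x$. $d(u,v)$ is the length of a shortest directed path from $u$ to $v$ ($\infty$ if none). Out-ball $\overrightarrow{\mathcal{B}}_r(x)=\{y : d(x,y)\le r\}$, in-ball $\overleftarrow{\mathcal{B}}_r(x)=\{y : d(y,x)\le r\}$, extended to sets by union. A path $[x_0,\dots,x_n]$ is a geodesic if $n=d(x_0,x_n)$. A directed geodesic triangle is an ordered triple $(p,q,r)$ of geodesics with the end of $p$ equal to the start of $q$ and $p\circ q$ having the same start and end as $r$; it is $\delta$-thin if every vertex of $r$ lies in $\overrightarrow{\mathcal{B}}_\delta(p)\cup\overleftarrow{\mathcal{B}}_\delta(q)$, every vertex of $p$ lies in $\overrightarrow{\mathcal{B}}_\delta(r)\cup\overleftarrow{\mathcal{B}}_\delta(q)$, and every vertex of $q$ lies in $\overrightarrow{\mathcal{B}}_\delta(p)\cup\overleftarrow{\mathcal{B}}_\delta(r)$. A directed graph is strongly $\delta$-hyperbolic if all its directed geodesic triangles are $\delta$-thin. *)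

theory Defs
  imports "Graph_Theory.Digraph" "HOL-Library.Extended_Nat"
begin

text \<open>Directed graphs (loops and multiple arcs allowed) are Graph_Theory's
  pre_digraph records: verts G, arcs G, tail G, head G.\<close>

definition uadj :: "('a,'b) pre_digraph \<Rightarrow> 'a \<Rightarrow> 'a \<Rightarrow> bool" where
  "uadj G x y \<longleftrightarrow> (\<exists>e\<in>arcs G. (tail G e = x \<and> head G e = y) \<or> (tail G e = y \<and> head G e = x))"

definition uwalk :: "('a,'b) pre_digraph \<Rightarrow> 'a list \<Rightarrow> bool" where
  "uwalk G xs \<longleftrightarrow> xs \<noteq> [] \<and> set xs \<subseteq> verts G \<and>
     (\<forall>i. Suc i < length xs \<longrightarrow> uadj G (xs ! i) (xs ! Suc i))"

text \<open>A cycle in the underlying undirected (simple, possibly with loops) graph: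
  either a loop [u,u], or a closed walk [v0,...,vn] with n >= 3, v0 = vn and
  v1,...,vn pairwise distinct.\<close>
definition ucycle :: "('a,'b) pre_digraph \<Rightarrow> 'a list \<Rightarrow> bool" where
  "ucycle G xs \<longleftrightarrow> uwalk G xs \<and> hd xs = last xs \<and> distinct (tl xs) \<and>
     (length xs = 2 \<or> length xs \<ge> 4)"

definition underlying_tree :: "('a,'b) pre_digraph \<Rightarrow> bool" where
  "underlying_tree G \<longleftrightarrow> verts G \<noteq> {} \<and>
     (\<forall>u\<in>verts G. \<forall>v\<in>verts G. \<exists>xs. uwalk G xs \<and> hd xs = u \<and> last xs = v) \<and>
     (\<nexists>xs. ucycle G xs)"

definition dpath :: "('a,'b) pre_digraph \<Rightarrow> 'a list \<Rightarrow> bool" where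
  "dpath G xs \<longleftrightarrow> xs \<noteq> [] \<and> set xs \<subseteq> verts G \<and>
     (\<forall>i. Suc i < length xs \<longrightarrow> (\<exists>e\<in>arcs G. tail G e = xs ! i \<and> head G e = xs ! Suc i))"

text \<open>Directed distance; infinity if there is no directed path.\<close>
definition ddist :: "('a,'b) pre_digraph \<Rightarrow> 'a \<Rightarrow> 'a \<Rightarrow> enat" where
  "ddist G u v = (INF xs\<in>{xs. dpath G xs \<and> hd xs = u \<and> last xs = v}. enat (length xs - 1))"

definition out_ball :: "('a,'b) pre_digraph \<Rightarrow> nat \<Rightarrow> 'a set \<Rightarrow> 'a set" where
  "out_ball G r S = {y \<in> verts G. \<exists>x\<in>S. ddist G x y \<le> enat r}"

definition in_ball :: "('a,'b) pre_digraph \<Rightarrow> nat \<Rightarrow> 'a set \<Rightarrow> 'a set" where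
  "in_ball G r S = {y \<in> verts G. \<exists>x\<in>S. ddist G y x \<le> enat r}"

definition geodesic :: "('a,'b) pre_digraph \<Rightarrow> 'a list \<Rightarrow> bool" where
  "geodesic G xs \<longleftrightarrow> dpath G xs \<and> enat (length xs - 1) = ddist G (hd xs) (last xs)"

definition geodesic_triangle :: "('a,'b) pre_digraph \<Rightarrow> 'a list \<Rightarrow> 'a list \<Rightarrow> 'a list \<Rightarrow> bool" where
  "geodesic_triangle G p q r \<longleftrightarrow> geodesic G p \<and> geodesic G q \<and> geodesic G r \<and>
     last p = hd q \<and> hd r = hd p \<and> last r = last q"

definition thin_triangle :: "('a,'b) pre_digraph \<Rightarrow> nat \<Rightarrow> 'a list \<Rightarrow> 'a list \<Rightarrow> 'a list \<Rightarrow> bool" where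
  "thin_triangle G \<delta> p q r \<longleftrightarrow>
     set r \<subseteq> out_ball G \<delta> (set p) \<union> in_ball G \<delta> (set q) \<and>
     set p \<subseteq> out_ball G \<delta> (set r) \<union> in_ball G \<delta> (set q) \<and>
     set q \<subseteq> out_ball G \<delta> (set p) \<union> in_ball G \<delta> (set r)"

definition strongly_hyperbolic :: "('a,'b) pre_digraph \<Rightarrow> nat \<Rightarrow> bool" where
  "strongly_hyperbolic G \<delta> \<longleftrightarrow>
     (\<forall>p q r. geodesic_triangle G p q r \<longrightarrow> thin_triangle G \<delta> p q r)"

end

theory Submission
  imports Defs
begin

text \<open>In a tree the vertices of a simple walk from u to v lie on every walk from u to v:
  otherwise the simple walk and a simple walk extracted from the other one would leave a
  common vertex in different directions and meet again, closing a cycle. A geodesic is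
  simple, and each side of a geodesic triangle has the same ends as the concatenation of
  the other two sides, read backwards where necessary (the underlying walks are
  undirected). So every side lies in the union of the other two sides, hence in their
  balls of radius 0.\<close>

definition rel_walk :: "('a \<Rightarrow> 'a \<Rightarrow> bool) \<Rightarrow> 'a set \<Rightarrow> 'a list \<Rightarrow> bool" where
  "rel_walk R V xs \<longleftrightarrow> xs \<noteq> [] \<and> set xs \<subseteq> V \<and>
     (\<forall>i. Suc i < length xs \<longrightarrow> R (xs ! i) (xs ! Suc i))"

lemma rel_walk_Nil [simp]: "\<not> rel_walk R V []"
  by (simp add: rel_walk_def)

lemma rel_walk_singleton [simp]: "rel_walk R V [x] \<longleftrightarrow> x \<in> V"
  by (simp add: rel_walk_def)

lemma rel_walk_Cons_Cons [simp]:
  "rel_walk R V (x # y # xs) \<longleftrightarrow> x \<in> V \<and> R x y \<and> rel_walk R V (y # xs)"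
  unfolding rel_walk_def
proof safe
  fix i
  assume "\<forall>i. Suc i < length (y # xs) \<longrightarrow> R ((y # xs) ! i) ((y # xs) ! Suc i)"
    and "R x y" and "Suc i < length (x # y # xs)"
  then show "R ((x # y # xs) ! i) ((x # y # xs) ! Suc i)"
    by (cases i) auto
qed fastforce+

lemma rel_walk_append_Cons_iff:
  "rel_walk R V (xs @ x # ys) \<longleftrightarrow> rel_walk R V (xs @ [x]) \<and> rel_walk R V (x # ys)"
  by (induction xs rule: induct_list012) (auto, (cases ys; simp)+)

lemma rel_walk_Cons_tl: "rel_walk R V (x # xs) \<Longrightarrow> xs \<noteq> [] \<Longrightarrow> rel_walk R V xs"
  by (cases xs) auto

lemma rel_walk_rev:
  assumes "symp R" and "rel_walk R V xs"
  shows "rel_walk R V (rev xs)"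
  using assms(2)
proof (induction xs rule: induct_list012)
  case (3 x y xs)
  have "rel_walk R V (rev xs @ [y])"
    using 3 by simp
  moreover have "rel_walk R V [y, x]"
    using 3 assms(1) by (auto dest: sympD simp: rel_walk_def)
  ultimately show ?case
    using rel_walk_append_Cons_iff[of R V "rev xs" y "[x]"] by simp
qed simp_all

lemma rel_walk_concat:
  assumes "rel_walk R V xs" and "rel_walk R V ys" and "last xs = hd ys"
  shows "rel_walk R V (xs @ tl ys)"
proof -
  obtain xs' x where xs: "xs = xs' @ [x]"
    using assms(1) by (cases xs rule: rev_cases) auto
  obtain ys' where ys: "ys = x # ys'"
    using assms by (cases ys) (auto simp: xs)
  show ?thesis
    using assms(1,2) rel_walk_append_Cons_iff[of R V xs' x ys'] by (simp add: xs ys)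
qed

lemma rel_walk_shorten:
  assumes "rel_walk R V xs" and "\<not> distinct xs"
  obtains ys where "rel_walk R V ys" "length ys < length xs"
    "hd ys = hd xs" "last ys = last xs" "set ys \<subseteq> set xs"
proof -
  obtain A x B C where xs: "xs = A @ x # B @ x # C"
    using assms(2) not_distinct_decomp by fastforce
  have "rel_walk R V (A @ [x])" and "rel_walk R V (x # B @ x # C)"
    using assms(1) rel_walk_append_Cons_iff[of R V A x "B @ x # C"] unfolding xs by blast+
  moreover from this(2) have "rel_walk R V (x # C)"
    using rel_walk_append_Cons_iff[of R V "x # B" x C] unfolding append_Cons by blast
  ultimately have "rel_walk R V (A @ x # C)"
    using rel_walk_append_Cons_iff[of R V A x C] by blast
  moreover have "hd (A @ x # C) = hd xs" and "last (A @ x # C) = last xs"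
    by (cases A; simp add: xs) (cases C; simp add: xs)
  ultimately show ?thesis
    using that[of "A @ x # C"] by (auto simp: xs)
qed

lemma rel_walk_distinct_subwalk:
  assumes "rel_walk R V xs"
  obtains ys where "rel_walk R V ys" "distinct ys"
    "hd ys = hd xs" "last ys = last xs" "set ys \<subseteq> set xs"
  using assms
proof (induction "length xs" arbitrary: xs rule: less_induct)
  case less
  show ?case
  proof (cases "distinct xs")
    case True
    then show ?thesis using less.prems by blast
  next
    case False
    then obtain xs' where "rel_walk R V xs'" "length xs' < length xs"
      "hd xs' = hd xs" "last xs' = last xs" "set xs' \<subseteq> set xs"
      using rel_walk_shorten[OF less.prems(2)] by blast
    with less.hyps[of xs'] less.prems(1) show ?thesis by force
  qed
qed

lemma uadj_iff_dominates: "uadj G x y \<longleftrightarrow> x \<rightarrow>\<^bsub>G\<^esub> y \<or> y \<rightarrow>\<^bsub>G\<^esub> x"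
  by (auto simp: uadj_def arcs_ends_conv)

lemma symp_uadj: "symp (uadj G)"
  by (auto intro: sympI simp: uadj_iff_dominates)

lemma dominates_iff: "x \<rightarrow>\<^bsub>G\<^esub> y \<longleftrightarrow> (\<exists>e\<in>arcs G. tail G e = x \<and> head G e = y)"
  by (auto simp: arcs_ends_conv)

lemma uwalk_eq_rel_walk: "uwalk G = rel_walk (uadj G) (verts G)"
  by (auto simp: fun_eq_iff uwalk_def rel_walk_def)

lemma dpath_eq_rel_walk: "dpath G = rel_walk (dominates G) (verts G)"
  by (simp add: fun_eq_iff dpath_def rel_walk_def dominates_iff)

lemma dpath_imp_uwalk: "dpath G xs \<Longrightarrow> uwalk G xs"
  by (auto simp: dpath_eq_rel_walk uwalk_eq_rel_walk rel_walk_def uadj_iff_dominates)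

lemma uwalk_rev: "uwalk G xs \<Longrightarrow> uwalk G (rev xs)"
  by (simp add: uwalk_eq_rel_walk rel_walk_rev[OF symp_uadj])

lemma diverging_uwalks_ucycle:
  assumes Y: "uwalk G (u # Y)" "distinct (u # Y)"
    and Z: "uwalk G (u # Z)" "distinct (u # Z)"
    and "Y \<noteq> []" "Z \<noteq> []" "hd Y \<noteq> hd Z" "last Y = last Z"
  shows "\<exists>xs. ucycle G xs"
proof -
  have "\<exists>x\<in>set Z. x \<in> set Y"
    using assms(5,6,8) by (metis last_in_set)
  \<comment> \<open>Follow Y from u to the first vertex c of Z that lies on Y, and go back along Z.\<close>
  then obtain pre c rest where Z_eq: "Z = pre @ c # rest" and "c \<in> set Y"
    and pre_off_Y: "\<forall>x\<in>set pre. x \<notin> set Y"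
    by (auto elim!: split_list_first_propE)
  then obtain A B where Y_eq: "Y = A @ c # B"
    by (meson split_list)
  have "rel_walk (uadj G) (verts G) (u # A @ [c])"
    using Y(1) rel_walk_append_Cons_iff[of _ _ "u # A" c B]
    by (simp add: uwalk_eq_rel_walk Y_eq)
  moreover have "rel_walk (uadj G) (verts G) (u # pre @ [c])"
    using Z(1) rel_walk_append_Cons_iff[of _ _ "u # pre" c rest]
    by (simp add: uwalk_eq_rel_walk Z_eq)
  then have "rel_walk (uadj G) (verts G) (c # rev pre @ [u])"
    using rel_walk_rev[OF symp_uadj] by fastforce
  ultimately have "uwalk G (u # A @ c # rev pre @ [u])"
    using rel_walk_append_Cons_iff[of _ _ "u # A" c "rev pre @ [u]"]
    by (simp add: uwalk_eq_rel_walk)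
  moreover have "distinct (A @ c # rev pre @ [u])"
    using Y(2) Z(2) pre_off_Y by (auto simp: Y_eq Z_eq)
  moreover have "A \<noteq> [] \<or> pre \<noteq> []"
    using assms(7) by (auto simp: Y_eq Z_eq)
  then have "length (u # A @ c # rev pre @ [u]) \<ge> 4"
    by (cases A; cases pre) auto
  ultimately have "ucycle G (u # A @ c # rev pre @ [u])"
    by (simp add: ucycle_def)
  then show ?thesis ..
qed

lemma acyclic_distinct_uwalks_eq:
  assumes "\<nexists>xs. ucycle G xs"
  shows "uwalk G ys \<Longrightarrow> distinct ys \<Longrightarrow> uwalk G zs \<Longrightarrow> distinct zs \<Longrightarrow>
    hd ys = hd zs \<Longrightarrow> last ys = last zs \<Longrightarrow> ys = zs"
proof (induction ys arbitrary: zs)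
  case Nil
  then show ?case by (simp add: uwalk_eq_rel_walk)
next
  case (Cons u Y)
  obtain Z where zs: "zs = u # Z"
    using Cons.prems by (cases zs) (auto simp: uwalk_eq_rel_walk)
  consider "Y = []" | "Z = []" | "Y \<noteq> []" "Z \<noteq> []" "hd Y = hd Z" | "Y \<noteq> []" "Z \<noteq> []" "hd Y \<noteq> hd Z"
    by blast
  then show ?case
  proof cases
    case 1
    then show ?thesis
      using Cons.prems by (cases Z rule: rev_cases) (auto simp: zs)
  next
    case 2
    then show ?thesis
      using Cons.prems by (cases Y rule: rev_cases) (auto simp: zs)
  next
    case 3
    then have "Y = Z"
      using Cons.IH[of Z] Cons.prems
      by (simp add: zs uwalk_eq_rel_walk rel_walk_Cons_tl)
    then show ?thesis by (simp add: zs)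
  next
    case 4
    then show ?thesis
      using diverging_uwalks_ucycle[of G u Y Z] Cons.prems assms by (simp add: zs)
  qed
qed

lemma acyclic_distinct_uwalk_subset:
  assumes "\<nexists>xs. ucycle G xs" and "uwalk G ys" "distinct ys"
    and "uwalk G xs" "hd ys = hd xs" "last ys = last xs"
  shows "set ys \<subseteq> set xs"
proof -
  obtain zs where "uwalk G zs" "distinct zs" "hd zs = hd xs" "last zs = last xs"
    and "set zs \<subseteq> set xs"
    using assms(4) rel_walk_distinct_subwalk unfolding uwalk_eq_rel_walk by blast
  moreover from this have "ys = zs"
    using assms acyclic_distinct_uwalks_eq[of G ys zs] by simp
  ultimately show ?thesis by simp
qed

lemma acyclic_distinct_uwalk_subset_concat:
  assumes "\<nexists>xs. ucycle G xs" and "uwalk G ys" "distinct ys"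
    and "uwalk G xs" "uwalk G zs" "last xs = hd zs"
    and "hd ys = hd xs" "last ys = last zs"
  shows "set ys \<subseteq> set xs \<union> set zs"
proof -
  have "xs \<noteq> []" "zs \<noteq> []"
    using assms(4,5) by (auto simp: uwalk_eq_rel_walk)
  then have "hd (xs @ tl zs) = hd xs" and "last (xs @ tl zs) = last zs"
    and "set (xs @ tl zs) \<subseteq> set xs \<union> set zs"
    using assms(6) by (cases zs; auto simp: last_append)+
  moreover have "uwalk G (xs @ tl zs)"
    using assms(4-6) rel_walk_concat by (simp add: uwalk_eq_rel_walk)
  ultimately show ?thesis
    using assms(1-3,7,8) acyclic_distinct_uwalk_subset[of G ys "xs @ tl zs"] by auto
qed

lemma ddist_le_length: "dpath G xs \<Longrightarrow> ddist G (hd xs) (last xs) \<le> enat (length xs - 1)"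
  unfolding ddist_def by (rule INF_lower) simp

lemma geodesic_distinct:
  assumes "geodesic G xs"
  shows "distinct xs"
proof (rule ccontr)
  assume "\<not> distinct xs"
  then obtain ys where "dpath G ys" "length ys < length xs" "hd ys = hd xs" "last ys = last xs"
    using assms rel_walk_shorten unfolding geodesic_def dpath_eq_rel_walk by blast
  have "ddist G (hd xs) (last xs) \<le> enat (length ys - 1)"
    using \<open>dpath G ys\<close> ddist_le_length[of G ys] \<open>hd ys = hd xs\<close> \<open>last ys = last xs\<close> by simp
  also have "\<dots> < enat (length xs - 1)"
    using \<open>length ys < length xs\<close> \<open>dpath G ys\<close> by (cases ys) (auto simp: dpath_def)
  finally show False
    using assms by (simp add: geodesic_def)
qed

lemma ddist_self_le: "x \<in> verts G \<Longrightarrow> ddist G x x \<le> enat r"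
  using ddist_le_length[of G "[x]"] by (simp add: dpath_def zero_enat_def[symmetric])

lemma subset_out_ball: "S \<subseteq> verts G \<Longrightarrow> S \<subseteq> out_ball G r S"
  by (auto simp: out_ball_def intro: ddist_self_le)

lemma subset_in_ball: "S \<subseteq> verts G \<Longrightarrow> S \<subseteq> in_ball G r S"
  by (auto simp: in_ball_def intro: ddist_self_le)

lemma thin_triangle_if_sides_covered:
  assumes "set p \<union> set q \<union> set r \<subseteq> verts G"
    and "set r \<subseteq> set p \<union> set q" "set p \<subseteq> set r \<union> set q" "set q \<subseteq> set p \<union> set r"
  shows "thin_triangle G \<delta> p q r"
  using assms subset_out_ball[of "set p" G \<delta>] subset_out_ball[of "set r" G \<delta>]
    subset_in_ball[of "set q" G \<delta>] subset_in_ball[of "set r" G \<delta>]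
  unfolding thin_triangle_def by blast

lemma geodesic_imp_uwalk: "geodesic G xs \<Longrightarrow> uwalk G xs"
  by (simp add: geodesic_def dpath_imp_uwalk)

theorem proposition2p4:
  fixes G :: "('a,'b) pre_digraph"
  assumes "wf_digraph G"
    and "underlying_tree G"
  shows "strongly_hyperbolic G 0"
  unfolding strongly_hyperbolic_def
proof (intro allI impI)
  fix p q r
  assume "geodesic_triangle G p q r"
  then have geo: "geodesic G p" "geodesic G q" "geodesic G r"
    and ends: "last p = hd q" "hd r = hd p" "last r = last q"
    by (simp_all add: geodesic_triangle_def)
  have acyclic: "\<nexists>xs. ucycle G xs"
    using assms(2) by (simp add: underlying_tree_def)
  note walks = geo[THEN geodesic_imp_uwalk] and simple = geo[THEN geodesic_distinct]
  show "thin_triangle G 0 p q r"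
  proof (rule thin_triangle_if_sides_covered)
    show "set p \<union> set q \<union> set r \<subseteq> verts G"
      using walks by (simp add: uwalk_def)
    show "set r \<subseteq> set p \<union> set q"
      using acyclic_distinct_uwalk_subset_concat[OF acyclic walks(3) simple(3) walks(1,2)] ends
      by simp
    show "set p \<subseteq> set r \<union> set q"
      using acyclic_distinct_uwalk_subset_concat[OF acyclic walks(1) simple(1) walks(3)
          uwalk_rev[OF walks(2)]] ends walks
      by (simp add: hd_rev last_rev)
    show "set q \<subseteq> set p \<union> set r"
      using acyclic_distinct_uwalk_subset_concat[OF acyclic walks(2) simple(2)
          uwalk_rev[OF walks(1)] walks(3)] ends walks
      by (simp add: hd_rev last_rev)
  qed
qed

end
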